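(* Let $n\ge27$, $\mathcal{X},\mathcal{Y}$ finite with $|\mathcal{X}|,|\mathcal{Y}|\ge2$, let $M$ be a discrete random variable, $\mathbf{X}$ a random vector on $\mathcal{X}^n$, and $(\mathbf{Y}_w)_{w\in\mathcal{P}(\mathcal{Y}|\mathcal{X})}$ random vectors on $\mathcal{Y}^n$ such that $M,\mathbf{X},(\mathbf{Y}_w)_w$ form a Markov chain in that order and $\mathbf{Y}_w|\mathbf{X}\sim w^n$. Let $\delta,\alpha>0$ and $\epsilon>\frac{2|\mathcal{X}||\mathcal{Y}|}{n}\log_2 n$. If for some $\tilde w\in\mathcal{P}(\mathcal{Y}|\mathcal{X})$ $$\Pr\left(|h(\mathbf{Y}_{\tilde w}|M)-\mathbb{H}(\mathbf{Y}_{\tilde w}|M)|>n\delta\right)<2^{-n\alpha},$$ then $$\Pr\left(|h(\mathbf{Y}_w|M)-\mathbb{H}(\mathbf{Y}_w|M)|>n\tilde\delta\right)<2^{-n\epsilon}+2^{-n(\alpha-\epsilon)},$$ where $$\tilde\delta=(2+2^{-n\epsilon}+2^{-n(\alpha-\epsilon)})(\delta+\epsilon)+(2^{-n\epsilon}+2^{-n(\alpha-\epsilon)})\left[\log_2|\mathcal{Y}|-\frac2n\log_2(2^{-n\epsilon}+2^{-n(\alpha-\epsilon)})\right],$$ for all $w\in\mathcal{P}(\mathcal{Y}|\mathcal{X})$ such that $$\sup_{\hat p\in\mathcal{P}(\mathcal{X}),\ \hat w\in\mathcal{P}(\mathcal{Y}|\mathcal{X})}\mathbb{D}_{\hat w}(w\|\tilde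 w|\hat p)\le\epsilon-\frac{2|\mathcal{X}||\mathcal{Y}|}{n}\log_2 n.$$
   Context: $\mathcal{P}(\mathcal{Y}|\mathcal{X})$ is the set of conditional distributions from $\mathcal{X}$ to $\mathcal{Y}$, $\mathcal{P}(\mathcal{X})$ the set of distributions on $\mathcal{X}$, $w^n(\mathbf{y}|\mathbf{x})=\prod_t w(y_t|x_t)$. $h(\mathbf{Y}_w|M)=-\log_2 p_{\mathbf{Y}_w|M}(\mathbf{Y}_w|M)$ and $\mathbb{H}$ denotes conditional entropy. $\mathbb{D}_{\hat w}(w\|\tilde w|\hat p)=\sum_{y,x}\hat w(y|x)\hat p(x)\log_2\frac{w(y|x)}{\tilde w(y|x)}$. *)

theory Defs
  imports "HOL-Probability.Probability"
begin

primrec chan_n :: "('x \<Rightarrow> 'y pmf) \<Rightarrow> 'x list \<Rightarrow> 'y list pmf" where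
  "chan_n w [] = return_pmf []"
| "chan_n w (x # xs) = bind_pmf (w x) (\<lambda>y. map_pmf (\<lambda>ys. y # ys) (chan_n w xs))"

(* joint law of (M, Y_w) when M - X - Y_w is a Markov chain and Y_w | X ~ w^n;
   PMX is the joint law of (M, X) *)
definition joint_MY :: "('m \<times> 'x list) pmf \<Rightarrow> ('x \<Rightarrow> 'y pmf) \<Rightarrow> ('m \<times> 'y list) pmf" where
  "joint_MY PMX w = bind_pmf PMX (\<lambda>(m, x). map_pmf (\<lambda>y. (m, y)) (chan_n w x))"

definition info_density :: "('m \<times> 'y) pmf \<Rightarrow> 'm \<times> 'y \<Rightarrow> real" where
  "info_density J z = - log 2 (pmf J z / pmf (map_pmf fst J) (fst z))"

definition cond_entropy :: "('m \<times> 'y) pmf \<Rightarrow> real" where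
  "cond_entropy J = measure_pmf.expectation J (info_density J)"

definition dev_prob :: "('m \<times> 'y) pmf \<Rightarrow> real \<Rightarrow> real" where
  "dev_prob J t = measure_pmf.prob J {z. \<bar>info_density J z - cond_entropy J\<bar> > t}"

definition log_ratio :: "real \<Rightarrow> real \<Rightarrow> ereal" where
  "log_ratio a b = (if a > 0 \<and> b > 0 then ereal (log 2 (a / b))
                    else if a > 0 then \<infinity> else if b > 0 then - \<infinity> else 0)"

definition cond_div :: "('x::finite \<Rightarrow> 'y::finite pmf) \<Rightarrow> ('x \<Rightarrow> 'y pmf) \<Rightarrow> ('x \<Rightarrow> 'y pmf) \<Rightarrow> 'x pmf \<Rightarrow> ereal" where
  "cond_div wh w wt ph = (\<Sum>y\<in>UNIV. \<Sum>x\<in>UNIV.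
      (if pmf (wh x) y * pmf ph x = 0 then 0
       else ereal (pmf (wh x) y * pmf ph x) * log_ratio (pmf (w x) y) (pmf (wt x) y)))"

end

theory Submission
  imports Defs
begin

(* Testing point masses in the supremum gives w(y|x) <= 2^eps wt(y|x), so the joint law Q of
   (M, Y_w) is dominated by 2^(n eps) times the joint law P of (M, Y_wt), and both have the law
   of M as first marginal.  Hence h(Y_w|M) >= h(Y_wt|M) - n eps on the support of Q, while Q gives
   mass < 2^(-n(alpha - eps)) to the deviation event of P and mass <= 2^(-n eps) to the event
   h(Y_w|M) > h(Y_wt|M) + n eps.  Off these bad events h(Y_w|M) lies within n(delta + eps) of
   H(Y_wt|M).  It remains to locate H(Y_w|M): the bad events contribute little to it because
   ln x <= x - 1 and E[1 / p(Y|M)] <= |Y|^n.  The lower bound on eps only serves to make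
   n eps >= 1/ln 2. *)

lemma measure_pmf_le_if_pmf_le:
  assumes "\<And>z. z \<in> E \<Longrightarrow> pmf Q z \<le> c * pmf P z" "0 \<le> c"
  shows "measure Q E \<le> c * measure P E"
proof -
  have "emeasure Q E = (\<integral>\<^sup>+z. pmf Q z \<partial>count_space E)"
    by (simp add: nn_integral_pmf)
  also have "\<dots> \<le> (\<integral>\<^sup>+z. ennreal c * pmf P z \<partial>count_space E)"
    by (rule nn_integral_mono) (use assms in \<open>auto simp: ennreal_mult[symmetric]\<close>)
  also have "\<dots> = ennreal c * emeasure P E"
    by (simp add: nn_integral_cmult nn_integral_pmf)
  finally show ?thesis
    using assms(2) by (simp add: measure_pmf.emeasure_eq_measure ennreal_mult[symmetric] ennreal_le_iff)
qed

lemma set_pmf_subset_if_pmf_le: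
  assumes "\<And>z. pmf Q z \<le> c * pmf P z"
  shows "set_pmf Q \<subseteq> set_pmf P"
  using assms by (auto simp: set_pmf_iff) (metis mult_zero_right pmf_nonneg order.antisym)

lemma pmf_map_pmf_le:
  assumes "\<And>y. pmf C y \<le> c * pmf C' y" "0 \<le> c"
  shows "pmf (map_pmf f C) z \<le> c * pmf (map_pmf f C') z"
  unfolding pmf_map by (rule measure_pmf_le_if_pmf_le) (use assms in auto)

lemma pmf_bind_pmf_le:
  assumes "\<And>a z. a \<in> set_pmf A \<Longrightarrow> pmf (F a) z \<le> c * pmf (G a) z"
  shows "pmf (bind_pmf A F) z \<le> c * pmf (bind_pmf A G) z"
proof -
  have int: "integrable A (\<lambda>a. pmf (H a) z)" for H :: "_ \<Rightarrow> _ pmf"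
    by (rule measure_pmf.integrable_const_bound[where B=1]) (auto simp: pmf_le_1)
  have "pmf (bind_pmf A F) z \<le> (\<integral>a. c * pmf (G a) z \<partial>A)"
    unfolding pmf_bind
    by (rule integral_mono_AE) (use int assms in \<open>auto simp: AE_measure_pmf_iff\<close>)
  then show ?thesis by (simp add: pmf_bind)
qed

lemma pmf_le_pmf_map_fst: "pmf J z \<le> pmf (map_pmf fst J) (fst z)"
proof -
  have "pmf J z = measure J {z}" by (simp add: measure_pmf_single)
  also have "\<dots> \<le> measure J (fst -` {fst z})" by (rule measure_pmf.finite_measure_mono) auto
  finally show ?thesis by (simp add: pmf_map)
qed

lemma pmf_map_pmf_pair_right:
  "pmf (map_pmf (\<lambda>m. (m, y)) p) (m', y') = (if y = y' then pmf p m' else 0)"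
proof -
  have "inj (\<lambda>m. (m, y))" by (auto simp: inj_def)
  from pmf_map_inj'[OF this, of p m'] show ?thesis by (auto intro: pmf_map_outside)
qed

lemma integral_indicator_bounds:
  fixes J :: "'a pmf" and f :: "'a \<Rightarrow> real"
  assumes "integrable J f" "\<And>z. z \<in> set_pmf J \<Longrightarrow> z \<in> G \<Longrightarrow> a \<le> f z \<and> f z \<le> b"
  shows "a * measure J G \<le> (\<integral>z. f z * indicator G z \<partial>J)"
    and "(\<integral>z. f z * indicator G z \<partial>J) \<le> b * measure J G"
proof -
  have int_fG: "integrable J (\<lambda>z. f z * indicator G z)"
    by (rule integrable_real_mult_indicator) (simp_all add: assms(1))
  have int_G: "integrable J (\<lambda>z. c * indicat_real G z)" for c :: real
    by (rule measure_pmf.integrable_const_bound[where B="\<bar>c\<bar>"]) (auto simp: indicator_def)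
  have "(\<integral>z. a * indicator G z \<partial>J) \<le> (\<integral>z. f z * indicator G z \<partial>J)"
    using assms(2) by (intro integral_mono_AE int_G int_fG) (auto simp: AE_measure_pmf_iff indicator_def)
  then show "a * measure J G \<le> (\<integral>z. f z * indicator G z \<partial>J)" by simp
  have "(\<integral>z. f z * indicator G z \<partial>J) \<le> (\<integral>z. b * indicator G z \<partial>J)"
    using assms(2) by (intro integral_mono_AE int_G int_fG) (auto simp: AE_measure_pmf_iff indicator_def)
  then show "(\<integral>z. f z * indicator G z \<partial>J) \<le> b * measure J G" by simp
qed

lemma chan_n_Cons_pair_pmf:
  "chan_n w (x # xs) = map_pmf (\<lambda>(y, ys). y # ys) (pair_pmf (w x) (chan_n w xs))"
  by (simp add: pair_pmf_def map_bind_pmf bind_return_pmf map_pmf_def[symmetric] pmf.map_comp o_def)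

lemma pmf_chan_n:
  "pmf (chan_n w xs) ys =
     (if length ys = length xs then \<Prod>i<length xs. pmf (w (xs ! i)) (ys ! i) else 0)"
proof (induction xs arbitrary: ys)
  case Nil
  then show ?case by (auto simp: indicator_def)
next
  case (Cons x xs)
  note IH = Cons.IH
  have inj: "inj (\<lambda>(y, ys). y # ys)" by (auto simp: inj_def)
  show ?case
  proof (cases ys)
    case Nil
    then show ?thesis
      unfolding chan_n_Cons_pair_pmf by (auto intro: pmf_map_outside)
  next
    case (Cons y ys')
    then show ?thesis
      unfolding chan_n_Cons_pair_pmf
      by (simp add: pmf_map_inj'[OF inj, of _ "(y, ys')", simplified] pmf_pair IH
          prod.lessThan_Suc_shift del: prod.lessThan_Suc)
  qed
qed

lemma set_pmf_chan_n_length: "ys \<in> set_pmf (chan_n w xs) \<Longrightarrow> length ys = length xs"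
  by (induction xs arbitrary: ys) auto

lemma pmf_chan_n_le:
  assumes "\<And>x y. pmf (w x) y \<le> K * pmf (w' x) y"
  shows "pmf (chan_n w xs) ys \<le> K ^ length xs * pmf (chan_n w' xs) ys"
proof -
  have "(\<Prod>i<length xs. pmf (w (xs ! i)) (ys ! i)) \<le> (\<Prod>i<length xs. K * pmf (w' (xs ! i)) (ys ! i))"
    by (intro prod_mono) (simp add: assms)
  then show ?thesis by (simp add: pmf_chan_n prod.distrib)
qed

lemma map_fst_joint_MY: "map_pmf fst (joint_MY PMX w) = map_pmf fst PMX"
  unfolding joint_MY_def map_bind_pmf
  by (simp add: case_prod_unfold pmf.map_comp o_def map_pmf_def[of fst PMX])

lemma set_pmf_joint_MY_length:
  assumes "\<forall>mx\<in>set_pmf PMX. length (snd mx) = n" "z \<in> set_pmf (joint_MY PMX w)"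
  shows "length (snd z) = n"
  using assms unfolding joint_MY_def by (force dest: set_pmf_chan_n_length)

lemma pmf_joint_MY_le:
  assumes "\<And>x y. pmf (w x) y \<le> K * pmf (w' x) y" "0 \<le> K"
    and "\<forall>mx\<in>set_pmf PMX. length (snd mx) = n"
  shows "pmf (joint_MY PMX w) z \<le> K ^ n * pmf (joint_MY PMX w') z"
  unfolding joint_MY_def
proof (rule pmf_bind_pmf_le)
  fix mx z assume "mx \<in> set_pmf PMX"
  moreover obtain m x where mx: "mx = (m, x)" by (cases mx)
  ultimately have "length x = n" using assms(3) by auto
  then show "pmf (case mx of (m, x) \<Rightarrow> map_pmf (Pair m) (chan_n w x)) z
      \<le> K ^ n * pmf (case mx of (m, x) \<Rightarrow> map_pmf (Pair m) (chan_n w' x)) z"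
    unfolding mx using pmf_chan_n_le[of w K w' x] assms(1,2) by (auto intro!: pmf_map_pmf_le)
qed

definition inv_cond_prob :: "('m \<times> 'y) pmf \<Rightarrow> 'm \<times> 'y \<Rightarrow> real" where
  "inv_cond_prob J z = pmf (map_pmf fst J) (fst z) / pmf J z"

lemma inv_cond_prob_nonneg: "0 \<le> inv_cond_prob J z"
  by (simp add: inv_cond_prob_def)

lemma inv_cond_prob_ge_1: "z \<in> set_pmf J \<Longrightarrow> 1 \<le> inv_cond_prob J z"
  using pmf_le_pmf_map_fst[of J z] by (simp add: inv_cond_prob_def pmf_positive)

lemma info_density_eq_log_inv_cond_prob:
  assumes "z \<in> set_pmf J"
  shows "info_density J z = log 2 (inv_cond_prob J z)"
proof -
  have "0 < pmf J z" "0 < pmf (map_pmf fst J) (fst z)"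
    using assms pmf_le_pmf_map_fst[of J z] by (auto simp: pmf_positive)
  then show ?thesis by (simp add: info_density_def inv_cond_prob_def log_divide)
qed

lemma info_density_nonneg: "z \<in> set_pmf J \<Longrightarrow> 0 \<le> info_density J z"
  using inv_cond_prob_ge_1[of z J] by (simp add: info_density_eq_log_inv_cond_prob)

lemma info_density_le:
  assumes "z \<in> set_pmf J" "0 < t"
  shows "info_density J z \<le> (t * inv_cond_prob J z - 1) / ln 2 - log 2 t"
proof -
  have "1 \<le> inv_cond_prob J z" using assms(1) by (rule inv_cond_prob_ge_1)
  then have pos: "0 < t * inv_cond_prob J z" using assms(2) by simp
  have "info_density J z = ln (t * inv_cond_prob J z) / ln 2 - log 2 t"
    using assms \<open>1 \<le> inv_cond_prob J z\<close>
    by (simp add: info_density_eq_log_inv_cond_prob log_def ln_mult add_divide_distrib)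
  also have "\<dots> \<le> (t * inv_cond_prob J z - 1) / ln 2 - log 2 t"
    using ln_le_minus_one[OF pos] by (simp add: divide_right_mono)
  finally show ?thesis .
qed

lemma nn_integral_inv_cond_prob_le_card:
  fixes J :: "('m \<times> 'y) pmf"
  assumes "finite Y" "\<forall>z\<in>set_pmf J. snd z \<in> Y"
  shows "(\<integral>\<^sup>+z. inv_cond_prob J z \<partial>J) \<le> card Y"
proof -
  let ?\<mu> = "map_pmf fst J"
  have "(\<integral>\<^sup>+z. inv_cond_prob J z \<partial>J) = (\<integral>\<^sup>+z. ennreal (pmf J z) * inv_cond_prob J z \<partial>count_space UNIV)"
    by (rule nn_integral_measure_pmf)
  also have "\<dots> \<le> (\<integral>\<^sup>+z. (\<Sum>y\<in>Y. ennreal (pmf (map_pmf (\<lambda>m. (m, y)) ?\<mu>) z)) \<partial>count_space UNIV)"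
  proof (rule nn_integral_mono)
    fix z :: "'m \<times> 'y"
    obtain m y where z: "z = (m, y)" by (cases z)
    show "ennreal (pmf J z) * inv_cond_prob J z \<le> (\<Sum>y\<in>Y. ennreal (pmf (map_pmf (\<lambda>m. (m, y)) ?\<mu>) z))"
    proof (cases "z \<in> set_pmf J")
      case True
      with assms have "y \<in> Y" by (auto simp: z)
      then have "(\<Sum>y\<in>Y. ennreal (pmf (map_pmf (\<lambda>m. (m, y)) ?\<mu>) z)) = pmf ?\<mu> m"
        using assms by (simp add: z pmf_map_pmf_pair_right if_distrib sum.delta cong: if_cong)
      with True show ?thesis
        by (simp add: z inv_cond_prob_def pmf_positive ennreal_mult[symmetric])
    qed (simp add: set_pmf_eq)
  qed
  also have "\<dots> = (\<Sum>y\<in>Y. \<integral>\<^sup>+z. pmf (map_pmf (\<lambda>m. (m, y)) ?\<mu>) z \<partial>count_space UNIV)"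
    by (rule nn_integral_sum) simp
  also have "\<dots> = card Y" by (simp add: nn_integral_pmf)
  finally show ?thesis .
qed

lemma
  fixes J :: "('m \<times> 'y) pmf"
  assumes "finite Y" "\<forall>z\<in>set_pmf J. snd z \<in> Y"
  shows integrable_inv_cond_prob: "integrable J (inv_cond_prob J)"
    and integral_inv_cond_prob_le_card: "(\<integral>z. inv_cond_prob J z \<partial>J) \<le> card Y"
proof -
  have le: "(\<integral>\<^sup>+z. inv_cond_prob J z \<partial>J) \<le> ennreal (card Y)"
    using nn_integral_inv_cond_prob_le_card[OF assms] by (simp add: ennreal_of_nat_eq_real_of_nat)
  show "integrable J (inv_cond_prob J)"
    using le by (intro integrableI_nonneg)
      (auto simp: inv_cond_prob_nonneg top.not_eq_extremum intro: le_less_trans)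
  have "(\<integral>z. inv_cond_prob J z \<partial>J) = enn2real (\<integral>\<^sup>+z. inv_cond_prob J z \<partial>J)"
    by (rule integral_eq_nn_integral) (simp_all add: inv_cond_prob_nonneg)
  also have "\<dots> \<le> card Y"
    using enn2real_mono[OF le] by simp
  finally show "(\<integral>z. inv_cond_prob J z \<partial>J) \<le> card Y" .
qed

lemma integrable_info_density:
  fixes J :: "('m \<times> 'y) pmf"
  assumes "finite Y" "\<forall>z\<in>set_pmf J. snd z \<in> Y"
  shows "integrable J (info_density J)"
proof (rule Bochner_Integration.integrable_bound)
  show "integrable J (\<lambda>z. inv_cond_prob J z / ln 2)"
    using integrable_inv_cond_prob[OF assms] by simp
  show "AE z in J. norm (info_density J z) \<le> norm (inv_cond_prob J z / ln 2)"
    unfolding AE_measure_pmf_iff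
  proof
    fix z assume z: "z \<in> set_pmf J"
    have "info_density J z \<le> (1 * inv_cond_prob J z - 1) / ln 2 - log 2 1"
      using z by (intro info_density_le) auto
    moreover have "(inv_cond_prob J z - 1) / ln 2 \<le> inv_cond_prob J z / ln 2"
      by (simp add: divide_right_mono)
    ultimately show "norm (info_density J z) \<le> norm (inv_cond_prob J z / ln 2)"
      using info_density_nonneg[OF z] inv_cond_prob_ge_1[OF z] by simp
  qed
qed simp

lemma integral_info_density_indicator_le:
  fixes J :: "('m \<times> 'y) pmf"
  assumes "finite Y" "\<forall>z\<in>set_pmf J. snd z \<in> Y" "0 < t"
  shows "(\<integral>z. info_density J z * indicator B z \<partial>J)
           \<le> (t * real (card Y) - measure J B) / ln 2 - measure J B * log 2 t"
proof -
  let ?g = "\<lambda>z. inv_cond_prob J z * indicator B z"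
  have int_g: "integrable J ?g"
    by (rule integrable_real_mult_indicator) (simp_all add: integrable_inv_cond_prob[OF assms(1,2)])
  have int_B: "integrable J (indicat_real B)"
    by (rule measure_pmf.integrable_const_bound[where B=1]) (auto simp: indicator_def)
  have "(\<integral>z. info_density J z * indicator B z \<partial>J)
        \<le> (\<integral>z. t / ln 2 * ?g z - (1 / ln 2 + log 2 t) * indicator B z \<partial>J)"
  proof (rule integral_mono_AE)
    show "integrable J (\<lambda>z. info_density J z * indicator B z)"
      by (rule integrable_real_mult_indicator) (simp_all add: integrable_info_density[OF assms(1,2)])
    show "integrable J (\<lambda>z. t / ln 2 * ?g z - (1 / ln 2 + log 2 t) * indicator B z)"
      using int_g int_B by simp
    show "AE z in J. info_density J z * indicator B z
            \<le> t / ln 2 * ?g z - (1 / ln 2 + log 2 t) * indicator B z"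
      using info_density_le[OF _ assms(3), of _ J]
      by (fastforce simp: AE_measure_pmf_iff indicator_def diff_divide_distrib)
  qed
  also have "\<dots> = t / ln 2 * (\<integral>z. ?g z \<partial>J) - (1 / ln 2 + log 2 t) * measure J B"
    using int_g int_B by simp
  also have "\<dots> \<le> t / ln 2 * real (card Y) - (1 / ln 2 + log 2 t) * measure J B"
  proof -
    have "(\<integral>z. ?g z \<partial>J) \<le> (\<integral>z. inv_cond_prob J z \<partial>J)"
      using int_g integrable_inv_cond_prob[OF assms(1,2)]
      by (rule integral_mono) (simp add: indicator_def inv_cond_prob_nonneg)
    then show ?thesis
      using integral_inv_cond_prob_le_card[OF assms(1,2)] assms(3)
      by (simp add: divide_right_mono mult_left_mono)
  qed
  also have "\<dots> = (t * real (card Y) - measure J B) / ln 2 - measure J B * log 2 t"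
    by (simp add: field_simps)
  finally show ?thesis .
qed

lemma cond_entropy_nonneg: "0 \<le> cond_entropy J"
  unfolding cond_entropy_def
  by (rule integral_nonneg_AE) (simp add: AE_measure_pmf_iff info_density_nonneg)

lemma cond_entropy_le_log_card:
  fixes J :: "('m \<times> 'y) pmf"
  assumes "finite Y" "\<forall>z\<in>set_pmf J. snd z \<in> Y"
  shows "cond_entropy J \<le> log 2 (card Y)"
proof -
  have "card Y > 0"
    using assms set_pmf_not_empty[of J] by (auto simp: card_gt_0_iff)
  then have "(\<integral>z. info_density J z * indicator UNIV z \<partial>J)
      \<le> (1 / real (card Y) * real (card Y) - measure J UNIV) / ln 2
          - measure J UNIV * log 2 (1 / real (card Y))"
    by (intro integral_info_density_indicator_le[OF assms]) simp
  then show ?thesis using \<open>card Y > 0\<close> by (simp add: cond_entropy_def log_divide)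
qed

lemma cond_entropy_bounds_off_bad_set:
  fixes J :: "('m \<times> 'y) pmf"
  assumes fib: "finite Y" "\<forall>z\<in>set_pmf J. snd z \<in> Y"
    and "0 < s"
    and near: "\<And>z. z \<in> set_pmf J \<Longrightarrow> z \<notin> B \<Longrightarrow> \<bar>info_density J z - H\<bar> \<le> D"
  shows "(H - D) * (1 - measure J B) \<le> cond_entropy J"
    and "cond_entropy J \<le> (s - measure J B) / ln 2 - measure J B * (log 2 s - log 2 (card Y))
                            + (H + D) * (1 - measure J B)"
proof -
  let ?h = "info_density J" and ?q = "measure J B"
  define I1 where "I1 = (\<integral>z. ?h z * indicator B z \<partial>J)"
  define I2 where "I2 = (\<integral>z. ?h z * indicator (- B) z \<partial>J)"
  have int_h: "integrable J ?h" by (rule integrable_info_density[OF fib])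
  have "cond_entropy J = (\<integral>z. ?h z * indicator B z + ?h z * indicator (- B) z \<partial>J)"
    unfolding cond_entropy_def by (intro Bochner_Integration.integral_cong) (auto simp: indicator_def)
  also have "\<dots> = I1 + I2" unfolding I1_def I2_def
    by (intro Bochner_Integration.integral_add integrable_real_mult_indicator int_h) simp_all
  finally have split: "cond_entropy J = I1 + I2" .
  have I1_ge: "0 \<le> I1" unfolding I1_def
    by (rule integral_nonneg_AE) (simp add: AE_measure_pmf_iff info_density_nonneg)
  have card_pos: "0 < card Y"
    using fib set_pmf_not_empty[of J] by (auto simp: card_gt_0_iff)
  have "I1 \<le> (s / card Y * card Y - ?q) / ln 2 - ?q * log 2 (s / card Y)"
    unfolding I1_def using \<open>0 < s\<close> card_pos by (intro integral_info_density_indicator_le[OF fib]) simp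
  then have I1_le: "I1 \<le> (s - ?q) / ln 2 - ?q * (log 2 s - log 2 (card Y))"
    using \<open>0 < s\<close> card_pos by (simp add: log_divide)
  have compl: "measure J (- B) = 1 - ?q"
    using measure_pmf.prob_compl[of B J] by (simp add: Compl_eq_Diff_UNIV)
  have near': "H - D \<le> ?h z \<and> ?h z \<le> H + D" if "z \<in> set_pmf J" "z \<in> - B" for z
    using near[of z] that by (simp add: abs_le_iff)
  have "(H - D) * (1 - ?q) \<le> I2" "I2 \<le> (H + D) * (1 - ?q)"
    using integral_indicator_bounds[of J ?h "- B" "H - D" "H + D", OF int_h near']
    unfolding I2_def compl by auto
  with split I1_ge I1_le
  show "(H - D) * (1 - ?q) \<le> cond_entropy J"
    and "cond_entropy J \<le> (s - ?q) / ln 2 - ?q * (log 2 s - log 2 (card Y)) + (H + D) * (1 - ?q)"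
    by linarith+
qed

lemma info_density_deviation_off_bad_set:
  fixes J :: "('m \<times> 'y) pmf"
  assumes fib: "finite Y" "\<forall>z\<in>set_pmf J. snd z \<in> Y"
    and s: "measure J B \<le> s" "0 < s" "s \<le> 1"
    and H: "0 \<le> H" "H \<le> log 2 (card Y)"
    and D: "1 / ln 2 \<le> D"
    and near: "\<And>z. z \<in> set_pmf J \<Longrightarrow> z \<notin> B \<Longrightarrow> \<bar>info_density J z - H\<bar> \<le> D"
    and z: "z \<in> set_pmf J" "z \<notin> B"
  shows "\<bar>info_density J z - cond_entropy J\<bar> \<le> (2 + s) * D + s * (log 2 (card Y) - log 2 s)"
proof -
  let ?h = "info_density J" and ?q = "measure J B" and ?L = "log 2 (card Y)"
  note entropy = cond_entropy_bounds_off_bad_set[where B=B and H=H and D=D, OF fib s(2) near]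
  have hz: "H - D \<le> ?h z" "?h z \<le> H + D" using near[OF z] by (auto simp: abs_le_iff)
  have q: "0 \<le> ?q" "?q \<le> s" using s(1) by auto
  have "0 \<le> D" by (rule order_trans[OF _ D]) simp
  have log_s: "log 2 s \<le> 0" using s(2,3) by simp
  have "0 < card Y" using fib set_pmf_not_empty[of J] by (auto simp: card_gt_0_iff)
  then have "0 \<le> ?L" by simp
  have "?h z - cond_entropy J \<le> 2 * D + ?q * H - ?q * D"
    using entropy(1) hz(2) by (simp add: algebra_simps)
  also have "\<dots> \<le> 2 * D + s * ?L"
    using mult_mono[OF q(2) H(2)] q(1) H(1) s(2) mult_nonneg_nonneg[OF q(1) \<open>0 \<le> D\<close>]
    by linarith
  finally have upper: "?h z - cond_entropy J \<le> 2 * D + s * ?L" .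
  have "cond_entropy J - ?h z
      \<le> s / ln 2 + 2 * D - ?q * log 2 s + ?q * ?L - (?q / ln 2 + ?q * (H + D))"
    using entropy(2) hz(1) by (simp add: algebra_simps diff_divide_distrib)
  also have "\<dots> \<le> s * D + 2 * D - s * log 2 s + s * ?L"
  proof -
    have "s / ln 2 \<le> s * D" using mult_left_mono[OF D, of s] s(2) by simp
    moreover have "- ?q * log 2 s \<le> - s * log 2 s" using q(2) log_s by (simp add: mult_right_mono_neg)
    moreover have "?q * ?L \<le> s * ?L" using q(2) \<open>0 \<le> ?L\<close> by (simp add: mult_right_mono)
    moreover have "0 \<le> ?q / ln 2 + ?q * (H + D)" using q(1) H(1) \<open>0 \<le> D\<close> by simp
    ultimately show ?thesis by linarith
  qed
  finally have lower: "cond_entropy J - ?h z \<le> s * D + 2 * D - s * log 2 s + s * ?L" .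
  have "2 * D + s * ?L \<le> s * D + 2 * D - s * log 2 s + s * ?L"
    using s(2) log_s \<open>0 \<le> D\<close> mult_nonneg_nonneg[of s D] mult_nonneg_nonpos[of s "log 2 s"] by linarith
  with upper lower show ?thesis by (simp add: abs_le_iff algebra_simps)
qed

lemma cond_div_return_pmf:
  "cond_div (\<lambda>_. return_pmf y) w wt (return_pmf x) = log_ratio (pmf (w x) y) (pmf (wt x) y)"
proof -
  let ?LR = "log_ratio (pmf (w x) y) (pmf (wt x) y)"
  have summand: "(if pmf (return_pmf y) y' * pmf (return_pmf x) x' = 0 then 0
      else ereal (pmf (return_pmf y) y' * pmf (return_pmf x) x')
             * log_ratio (pmf (w x') y') (pmf (wt x') y'))
      = (if y' = y then if x' = x then ?LR else 0 else 0)" for x' y'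
    by (auto simp: indicator_def)
  have inner: "(\<Sum>x'\<in>UNIV. if y' = y then if x' = x then ?LR else 0 else 0)
      = (if y' = y then ?LR else 0)" for y'
    by (cases "y' = y") simp_all
  show ?thesis unfolding cond_div_def summand inner by simp
qed

lemma le_powr_mult_if_log_ratio_le:
  assumes "log_ratio a b \<le> ereal r" "0 \<le> a" "0 \<le> b"
  shows "a \<le> 2 powr r * b"
proof (cases "0 < a \<and> 0 < b")
  case True
  then have "log 2 (a / b) \<le> r" using assms(1) by (simp add: log_ratio_def)
  then have "a / b \<le> 2 powr r" using True by (simp add: le_powr_iff)
  then show ?thesis using True by (simp add: divide_le_eq)
qed (use assms in \<open>auto simp: log_ratio_def split: if_splits\<close>)

lemma pmf_le_if_sup_cond_div_le:
  fixes w wt :: "'x::finite \<Rightarrow> 'y::finite pmf"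
  assumes "(SUP ph \<in> UNIV. SUP wh \<in> UNIV. cond_div wh w wt ph) \<le> ereal r"
  shows "pmf (w x) y \<le> 2 powr r * pmf (wt x) y"
proof (rule le_powr_mult_if_log_ratio_le)
  have "cond_div (\<lambda>_. return_pmf y) w wt (return_pmf x)
      \<le> (SUP ph \<in> UNIV. SUP wh \<in> UNIV. cond_div wh w wt ph)"
    by (intro SUP_upper2[of "return_pmf x"] SUP_upper) simp_all
  with assms show "log_ratio (pmf (w x) y) (pmf (wt x) y) \<le> ereal r"
    by (simp add: cond_div_return_pmf)
qed simp_all

lemma info_density_ge_if_pmf_le:
  assumes "map_pmf fst Q = map_pmf fst P" "z \<in> set_pmf Q" "pmf Q z \<le> 2 powr e * pmf P z"
  shows "info_density P z - e \<le> info_density Q z"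
proof -
  let ?\<mu> = "pmf (map_pmf fst P) (fst z)"
  have Q: "0 < pmf Q z" using assms(2) by (simp add: pmf_positive)
  have P: "0 < pmf P z"
  proof (rule ccontr)
    assume "\<not> 0 < pmf P z"
    then have "pmf P z = 0" using pmf_nonneg[of P z] by linarith
    with Q assms(3) show False by simp
  qed
  have \<mu>: "0 < ?\<mu>" using Q pmf_le_pmf_map_fst[of Q z] assms(1) by simp
  have "log 2 (pmf Q z / ?\<mu>) \<le> log 2 (2 powr e * pmf P z / ?\<mu>)"
    using Q \<mu> assms(3) by (simp add: divide_right_mono)
  also have "\<dots> = e + log 2 (pmf P z / ?\<mu>)"
    using P \<mu> by (simp add: log_mult log_divide)
  finally show ?thesis using assms(1) by (simp add: info_density_def)
qed

lemma pmf_le_if_info_density_gt: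
  assumes "map_pmf fst Q = map_pmf fst P" "z \<in> set_pmf Q" "z \<in> set_pmf P"
    and "info_density P z + e < info_density Q z"
  shows "pmf Q z \<le> 2 powr (- e) * pmf P z"
proof -
  let ?\<mu> = "pmf (map_pmf fst P) (fst z)"
  have Q: "0 < pmf Q z" and P: "0 < pmf P z" using assms(2,3) by (simp_all add: pmf_positive)
  have \<mu>: "0 < ?\<mu>" using P pmf_le_pmf_map_fst[of P z] by simp
  have "log 2 (pmf Q z / ?\<mu>) < log 2 (pmf P z / ?\<mu>) - e"
    using assms(1,4) by (simp add: info_density_def)
  also have "\<dots> = log 2 (2 powr (- e) * pmf P z / ?\<mu>)"
    using P \<mu> by (simp add: log_mult log_divide)
  finally have "pmf Q z / ?\<mu> < 2 powr (- e) * pmf P z / ?\<mu>"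
    using Q P \<mu> by simp
  then show ?thesis using \<mu> by (simp add: divide_less_cancel)
qed

lemma measure_deviation_or_excess_lt:
  fixes P Q :: "('m \<times> 'y) pmf"
  assumes marg: "map_pmf fst Q = map_pmf fst P"
    and dom: "\<And>z. pmf Q z \<le> 2 powr e * pmf P z"
    and conc: "dev_prob P t < 2 powr (- \<beta>)"
  shows "measure Q ({z. t < \<bar>info_density P z - cond_entropy P\<bar>}
                    \<union> {z. info_density P z + e < info_density Q z}) < 2 powr (- e) + 2 powr (e - \<beta>)"
    (is "measure Q (?B1 \<union> ?B2) < _")
proof -
  have "measure Q ?B1 \<le> 2 powr e * measure P ?B1"
    by (rule measure_pmf_le_if_pmf_le) (simp_all add: dom)
  also have "\<dots> < 2 powr e * 2 powr (- \<beta>)"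
    using conc by (simp add: dev_prob_def)
  finally have B1: "measure Q ?B1 < 2 powr (e - \<beta>)" by (simp add: powr_diff powr_minus divide_inverse)
  have "measure Q ?B2 \<le> 2 powr (- e) * measure P ?B2"
  proof (rule measure_pmf_le_if_pmf_le)
    fix z assume "z \<in> ?B2"
    then show "pmf Q z \<le> 2 powr (- e) * pmf P z"
      using set_pmf_subset_if_pmf_le[OF dom] marg pmf_le_if_info_density_gt[of Q P z e]
      by (cases "z \<in> set_pmf Q") (auto simp: set_pmf_iff)
  qed simp
  also have "\<dots> \<le> 2 powr (- e)" by (simp add: mult_left_le)
  finally have B2: "measure Q ?B2 \<le> 2 powr (- e)" .
  have "measure Q (?B1 \<union> ?B2) \<le> measure Q ?B1 + measure Q ?B2"
    by (rule measure_subadditive) auto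
  with B1 B2 show ?thesis by linarith
qed

lemma dev_prob_transfer:
  fixes P Q :: "('m \<times> 'y) pmf" and t e \<beta> :: real
  defines "s \<equiv> 2 powr (- e) + 2 powr (e - \<beta>)"
  assumes marg: "map_pmf fst Q = map_pmf fst P"
    and dom: "\<And>z. pmf Q z \<le> 2 powr e * pmf P z"
    and fib: "finite Y" "\<forall>z\<in>set_pmf P. snd z \<in> Y"
    and conc: "dev_prob P t < 2 powr (- \<beta>)"
    and D: "1 / ln 2 \<le> t + e"
  shows "dev_prob Q ((2 + s) * (t + e) + s * (log 2 (card Y) - 2 * log 2 s)) < s"
proof -
  define B where "B = {z. t < \<bar>info_density P z - cond_entropy P\<bar>}
                      \<union> {z. info_density P z + e < info_density Q z}"
  have bad: "measure Q B < s"
    unfolding B_def s_def by (rule measure_deviation_or_excess_lt[OF marg dom conc])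
  show ?thesis
  proof (cases "s \<le> 1")
    case False
    then show ?thesis
      unfolding dev_prob_def using measure_pmf.prob_le_1[of Q] by (meson le_less_trans not_le)
  next
    case True
    have s_pos: "0 < s" unfolding s_def by (simp add: add_pos_pos)
    have fib_Q: "\<forall>z\<in>set_pmf Q. snd z \<in> Y" using fib(2) set_pmf_subset_if_pmf_le[OF dom] by auto
    have near: "\<bar>info_density Q z - cond_entropy P\<bar> \<le> t + e" if "z \<in> set_pmf Q" "z \<notin> B" for z
      using info_density_ge_if_pmf_le[OF marg that(1) dom] that(2) by (auto simp: B_def)
    let ?thr = "(2 + s) * (t + e) + s * (log 2 (card Y) - 2 * log 2 s)"
    have dev: "\<bar>info_density Q z - cond_entropy Q\<bar> \<le> ?thr" if "z \<in> set_pmf Q" "z \<notin> B" for z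
    proof -
      have "\<bar>info_density Q z - cond_entropy Q\<bar> \<le> (2 + s) * (t + e) + s * (log 2 (card Y) - log 2 s)"
        using bad cond_entropy_nonneg cond_entropy_le_log_card[OF fib]
        by (intro info_density_deviation_off_bad_set[OF fib(1) fib_Q _ s_pos True _ _ D near that])
          simp_all
      moreover have "s * log 2 s \<le> 0" using s_pos True by (simp add: mult_nonneg_nonpos)
      ultimately show ?thesis by (simp add: algebra_simps)
    qed
    have "dev_prob Q ?thr = measure Q ({z. ?thr < \<bar>info_density Q z - cond_entropy Q\<bar>} \<inter> set_pmf Q)"
      by (simp add: dev_prob_def measure_Int_set_pmf)
    also have "\<dots> \<le> measure Q B"
      by (rule measure_pmf.finite_measure_mono) (use dev in \<open>force+\<close>)
    finally show ?thesis using bad by linarith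
  qed
qed

lemma dev_prob_joint_MY_transfer:
  fixes n :: nat and PMX :: "('m \<times> 'x::finite list) pmf" and w wt :: "'x \<Rightarrow> 'y::finite pmf"
    and \<delta> \<alpha> \<epsilon> :: real
  defines "s \<equiv> 2 powr (- real n * \<epsilon>) + 2 powr (- real n * (\<alpha> - \<epsilon>))"
  assumes len: "\<forall>mx\<in>set_pmf PMX. length (snd mx) = n"
    and sup: "(SUP ph \<in> UNIV. SUP wh \<in> UNIV. cond_div wh w wt ph) \<le> ereal \<epsilon>"
    and conc: "dev_prob (joint_MY PMX wt) (real n * \<delta>) < 2 powr (- real n * \<alpha>)"
    and D: "1 / ln 2 \<le> real n * (\<delta> + \<epsilon>)"
  shows "dev_prob (joint_MY PMX w)
           (real n * ((2 + s) * (\<delta> + \<epsilon>) + s * (log 2 (real CARD('y)) - 2 / real n * log 2 s))) < s"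
proof -
  let ?Yn = "{ys :: 'y list. length ys = n}"
  have "0 < n" using D by (cases n) auto
  have marg: "map_pmf fst (joint_MY PMX w) = map_pmf fst (joint_MY PMX wt)"
    by (simp add: map_fst_joint_MY)
  have dom: "pmf (joint_MY PMX w) z \<le> 2 powr (real n * \<epsilon>) * pmf (joint_MY PMX wt) z" for z
    using pmf_joint_MY_le[OF pmf_le_if_sup_cond_div_le[OF sup] _ len]
    by (simp add: powr_realpow[symmetric] powr_powr mult.commute)
  have fib: "\<forall>z\<in>set_pmf (joint_MY PMX wt). snd z \<in> ?Yn"
    using set_pmf_joint_MY_length[OF len] by auto
  have card_Yn: "card ?Yn = CARD('y) ^ n" and "finite ?Yn"
    using card_lists_length_eq[of "UNIV :: 'y set" n] finite_lists_length_eq[of "UNIV :: 'y set" n]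
    by simp_all
  have "dev_prob (joint_MY PMX w) ((2 + s) * (real n * \<delta> + real n * \<epsilon>)
      + s * (log 2 (card ?Yn) - 2 * log 2 s)) < s"
    unfolding s_def
    using dev_prob_transfer[where t="real n * \<delta>" and e="real n * \<epsilon>" and \<beta>="real n * \<alpha>",
        OF marg dom \<open>finite ?Yn\<close> fib] conc D
    by (simp add: right_diff_distrib' distrib_left)
  moreover have "real n * ((2 + s) * (\<delta> + \<epsilon>) + s * (log 2 (real CARD('y)) - 2 / real n * log 2 s))
      = (2 + s) * (real n * \<delta> + real n * \<epsilon>) + s * (log 2 (card ?Yn) - 2 * log 2 s)"
    using \<open>0 < n\<close> by (simp add: card_Yn log_nat_power field_simps)
  ultimately show ?thesis by simp
qed

theorem lemma32:
  fixes n :: nat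
    and PMX :: "('m \<times> 'x::finite list) pmf"
    and wt :: "'x \<Rightarrow> 'y::finite pmf"
    and \<delta> \<alpha> \<epsilon> :: real
  assumes "n \<ge> 27"
    and "CARD('x) \<ge> 2" and "CARD('y) \<ge> 2"
    and "\<forall>mx \<in> set_pmf PMX. length (snd mx) = n"
    and "\<delta> > 0" and "\<alpha> > 0"
    and "\<epsilon> > 2 * real CARD('x) * real CARD('y) / real n * log 2 (real n)"
    and "dev_prob (joint_MY PMX wt) (real n * \<delta>) < 2 powr (- real n * \<alpha>)"
  shows "\<forall>w :: 'x \<Rightarrow> 'y pmf.
     (SUP ph \<in> (UNIV :: 'x pmf set). SUP wh \<in> (UNIV :: ('x \<Rightarrow> 'y pmf) set). cond_div wh w wt ph)
        \<le> ereal (\<epsilon> - 2 * real CARD('x) * real CARD('y) / real n * log 2 (real n))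
     \<longrightarrow>
     (let s = 2 powr (- real n * \<epsilon>) + 2 powr (- real n * (\<alpha> - \<epsilon>));
          \<delta>' = (2 + s) * (\<delta> + \<epsilon>) + s * (log 2 (real CARD('y)) - 2 / real n * log 2 s)
      in dev_prob (joint_MY PMX w) (real n * \<delta>') < s)"
proof (intro allI impI, unfold Let_def, rule dev_prob_joint_MY_transfer[OF assms(4) _ assms(8)])
  fix w :: "'x \<Rightarrow> 'y pmf"
  let ?c = "2 * real CARD('x) * real CARD('y) / real n * log 2 (real n)"
  assume sup: "(SUP ph \<in> UNIV. SUP wh \<in> UNIV. cond_div wh w wt ph) \<le> ereal (\<epsilon> - ?c)"
  have "2 * 2 * 2 * 1 \<le> 2 * real CARD('x) * real CARD('y) * log 2 (real n)"
    using assms(1-3) by (intro mult_mono) auto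
  then have nc: "8 \<le> real n * ?c" using assms(1) by simp
  then have "0 \<le> ?c" using assms(1) by (simp add: zero_le_mult_iff)
  with sup show "(SUP ph \<in> UNIV. SUP wh \<in> UNIV. cond_div wh w wt ph) \<le> ereal \<epsilon>"
    by (simp add: order_trans)
  have "8 < real n * \<epsilon>"
    using nc mult_strict_left_mono[OF assms(7), of "real n"] assms(1) by linarith
  moreover have "1 / ln 2 \<le> (3 / 2 :: real)" using ln2_ge_two_thirds by (simp add: field_simps)
  moreover have "0 < real n * \<delta>" using assms(1,5) by simp
  ultimately show "1 / ln 2 \<le> real n * (\<delta> + \<epsilon>)" by (simp add: distrib_left)
qed

end
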